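(* Assume Condition U1. For every $\sigma=(b,v)\in\mathbb{R}\times(-1,1)$, the symplectic form $\Omega$ is nondegenerate on the tangent space $\mathcal{T}_{S(\sigma)}\mathcal{S}=\mathrm{span}\{\tau_1(v),\tau_2(v)\}$, i.e. $\mathcal{T}_{S(\sigma)}\mathcal{S}$ is a symplectic subspace.
   Context: Fix $a>0$. Condition U1: $U:\mathbb{R}\to\mathbb{R}$ smooth, $U(\pm a)=U'(\pm a)=0$, $U''(\pm a)>0$, $U>0$ on $(-a,a)$, $\inf U>-\infty$, and for some $m>0$, $U(\psi)=\frac{m^2}{2}(\psi\mp a)^2+\mathcal{O}(|\psi\mp a|^{14})$ as $\psi\to\pm a$. $s$ is a kink: $s''=U'(s)$, $s(\pm\infty)=\pm a$. For $|v|<1$: $\gamma=(1-v^2)^{-1/2}$, $\psi_v(y)=s(\gamma y)$, $\pi_v=-v\psi_v'$. For $\sigma=(b,v)$, $S(\sigma)=(\psi_v(x-b),\pi_v(x-b))$ and $\mathcal{S}=\{S(\sigma):b\in\mathbb{R},|v|<1\}$. Tangent vectors (as functions of $y=x-b$): $\tau_1(v)=\partial_bS(\sigma)=(-\psi_v'(y),-\pi_v'(y))$, $\tau_2(v)=\partial_vS(\sigma)=(\partial_v\psi_v(y),\partial_v\pi_v(y))$. Symplectic form on $E=H^1(\mathbb{R})\oplus L^2(\mathbb{R})$: $\Omega(Y_1,Y_2)=\langle Y_1,JY_2\rangle=\langle\psi_1,\pi_2\rangle-\langle\pi_1,\psi_2\rangle$, $J=\begin{pmatrix}0&1\\-1&0\end{pmatrix}$,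 $\langle f,g\rangle=\int fg$. *)

theory Defs
  imports "HOL-Analysis.Analysis" "HOL-Library.Landau_Symbols"
begin

definition smooth_fun :: "(real \<Rightarrow> real) \<Rightarrow> bool" where
  "smooth_fun f \<longleftrightarrow> (\<forall>n x. ((deriv ^^ n) f) differentiable (at x))"

definition cond_U1 :: "real \<Rightarrow> (real \<Rightarrow> real) \<Rightarrow> bool" where
  "cond_U1 a U \<longleftrightarrow> smooth_fun U
     \<and> U a = 0 \<and> U (-a) = 0 \<and> deriv U a = 0 \<and> deriv U (-a) = 0
     \<and> deriv (deriv U) a > 0 \<and> deriv (deriv U) (-a) > 0
     \<and> (\<forall>\<psi>. -a < \<psi> \<and> \<psi> < a \<longrightarrow> U \<psi> > 0)
     \<and> bdd_below (range U)
     \<and> (\<exists>m>0. (\<lambda>\<psi>. U \<psi> - m\<^sup>2 / 2 * (\<psi> - a)\<^sup>2) \<in> O[at a](\<lambda>\<psi>. \<bar>\<psi> - a\<bar> ^ 14)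
            \<and> (\<lambda>\<psi>. U \<psi> - m\<^sup>2 / 2 * (\<psi> + a)\<^sup>2) \<in> O[at (-a)](\<lambda>\<psi>. \<bar>\<psi> + a\<bar> ^ 14))"

definition is_kink :: "real \<Rightarrow> (real \<Rightarrow> real) \<Rightarrow> (real \<Rightarrow> real) \<Rightarrow> bool" where
  "is_kink a U s \<longleftrightarrow> (\<forall>x. s differentiable (at x)) \<and> (\<forall>x. (deriv s) differentiable (at x))
     \<and> (\<forall>x. deriv (deriv s) x = deriv U (s x))
     \<and> (s \<longlongrightarrow> a) at_top \<and> (s \<longlongrightarrow> -a) at_bot"

definition lgamma :: "real \<Rightarrow> real" where
  "lgamma v = 1 / sqrt (1 - v\<^sup>2)"

definition psi_v :: "(real \<Rightarrow> real) \<Rightarrow> real \<Rightarrow> real \<Rightarrow> real" where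
  "psi_v s v y = s (lgamma v * y)"

definition pi_v :: "(real \<Rightarrow> real) \<Rightarrow> real \<Rightarrow> real \<Rightarrow> real" where
  "pi_v s v y = - v * deriv (psi_v s v) y"

type_synonym state = "(real \<Rightarrow> real) \<times> (real \<Rightarrow> real)"

text \<open>Tangent vectors at S(b,v), as functions of x (with y = x - b).\<close>
definition tau1 :: "(real \<Rightarrow> real) \<Rightarrow> real \<Rightarrow> real \<Rightarrow> state" where
  "tau1 s b v = ((\<lambda>x. - deriv (psi_v s v) (x - b)), (\<lambda>x. - deriv (pi_v s v) (x - b)))"

definition tau2 :: "(real \<Rightarrow> real) \<Rightarrow> real \<Rightarrow> real \<Rightarrow> state" where
  "tau2 s b v = ((\<lambda>x. deriv (\<lambda>w. psi_v s w (x - b)) v), (\<lambda>x. deriv (\<lambda>w. pi_v s w (x - b)) v))"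

definition Omega :: "state \<Rightarrow> state \<Rightarrow> real" where
  "Omega Y1 Y2 = (\<integral>x. fst Y1 x * snd Y2 x \<partial>lborel) - (\<integral>x. snd Y1 x * fst Y2 x \<partial>lborel)"

definition lin_comb :: "real \<Rightarrow> state \<Rightarrow> real \<Rightarrow> state \<Rightarrow> state" where
  "lin_comb c1 Y1 c2 Y2 = ((\<lambda>x. c1 * fst Y1 x + c2 * fst Y2 x), (\<lambda>x. c1 * snd Y1 x + c2 * snd Y2 x))"

definition span2 :: "state \<Rightarrow> state \<Rightarrow> state set" where
  "span2 Y1 Y2 = {lin_comb c1 Y1 c2 Y2 | c1 c2. True}"

definition symplectic_subspace :: "state set \<Rightarrow> bool" where
  "symplectic_subspace V \<longleftrightarrow> (\<forall>Y\<in>V. (\<forall>Z\<in>V. Omega Y Z = 0) \<longrightarrow> Y = ((\<lambda>_. 0), (\<lambda>_. 0)))"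

end

theory Submission
  imports Defs "HOL-Probability.Sinc_Integral"
begin

text \<open>
  With \<open>\<gamma> = lgamma v\<close>, \<open>F = s'(\<gamma> y)\<close> and \<open>G = s''(\<gamma> y)\<close> the two tangent vectors are
  \<open>\<tau>\<^sub>1 = (-\<gamma> F, v \<gamma>\<^sup>2 G)\<close> and \<open>\<tau>\<^sub>2 = (v \<gamma>\<^sup>3 y F, -\<gamma>\<^sup>3 F - v\<^sup>2 \<gamma>\<^sup>4 y G)\<close>; the mixed terms
  cancel and \<open>\<Omega>(\<tau>\<^sub>1, \<tau>\<^sub>2) = \<gamma>\<^sup>3 \<integral> s'\<^sup>2 > 0\<close>. A two-dimensional span on which \<open>\<Omega>\<close> does not
  vanish is symplectic. Bilinearity of \<open>\<Omega>\<close> needs the pairings to be integrable, which holds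
  because \<open>s'\<close> and \<open>s''\<close> decay exponentially: energy conservation and the boundary
  conditions give \<open>s'\<^sup>2 = 2 U(s)\<close>, so near the nondegenerate vacuum \<open>a\<close> the quantity
  \<open>W = (s - a)\<^sup>2\<close> obeys \<open>W' \<le> -\<kappa> W\<close>.
\<close>

lemma MVT_between:
  fixes f f' :: "real \<Rightarrow> real"
  assumes "\<And>t. (f has_real_derivative f' t) (at t)"
  obtains z where "\<bar>z - y\<bar> \<le> \<bar>x - y\<bar>" "f x - f y = (x - y) * f' z"
proof (cases x y rule: linorder_cases)
  case less
  with MVT2[OF less, of f f'] assms obtain z where "x < z" "z < y" "f y - f x = (y - x) * f' z"
    by blast
  then show ?thesis using that[of z] by (simp add: algebra_simps)
next
  case equal
  then show ?thesis using that[of y] by simp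
next
  case greater
  with MVT2[OF greater, of f f'] assms obtain z where "y < z" "z < x" "f x - f y = (x - y) * f' z"
    by blast
  then show ?thesis using that[of z] by simp
qed

lemma quadratic_bounds_near_nondegenerate_zero:
  fixes f f' f'' :: "real \<Rightarrow> real"
  assumes f': "\<And>x. (f has_real_derivative f' x) (at x)"
    and f'': "\<And>x. (f' has_real_derivative f'' x) (at x)"
    and cont: "isCont f'' c" and zero: "f c = 0" "f' c = 0" and pos: "f'' c > 0"
  obtains \<delta> k M L where "\<delta> > 0" "k > 0"
    "\<And>x. \<bar>x - c\<bar> < \<delta> \<Longrightarrow> k * (x - c)\<^sup>2 \<le> f x \<and> f x \<le> M * (x - c)\<^sup>2 \<and> \<bar>f' x\<bar> \<le> L * \<bar>x - c\<bar>"
proof -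
  define l where "l = f'' c"
  obtain \<delta> where \<delta>: "\<delta> > 0" and near: "\<And>x. \<bar>x - c\<bar> < \<delta> \<Longrightarrow> \<bar>f'' x - l\<bar> < l / 2"
    using cont pos unfolding continuous_at_eps_delta l_def dist_real_def
    by (metis half_gt_zero)
  have f''_bounds: "l / 2 \<le> f'' x \<and> f'' x \<le> 2 * l" if "\<bar>x - c\<bar> < \<delta>" for x
    using near[OF that] by linarith
  have bounds: "l / 4 * (x - c)\<^sup>2 \<le> f x \<and> f x \<le> l * (x - c)\<^sup>2 \<and> \<bar>f' x\<bar> \<le> 2 * l * \<bar>x - c\<bar>"
    if x: "\<bar>x - c\<bar> < \<delta>" for x
  proof (cases "x = c")
    case True
    then show ?thesis using zero by simp
  next
    case False
    define diff where "diff m = (if m = 0 then f else if m = 1 then f' else f'')" for m :: nat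
    have "\<forall>m t. m < 2 \<and> min x c \<le> t \<and> t \<le> max x c \<longrightarrow> DERIV (diff m) t :> diff (Suc m) t"
      using f' f'' by (auto simp: diff_def less_2_cases_iff)
    then obtain t where t: "if x < c then x < t \<and> t < c else c < t \<and> t < x"
      and taylor: "f x = (\<Sum>m<2. diff m c / fact m * (x - c) ^ m) + diff 2 t / fact 2 * (x - c)\<^sup>2"
      using Taylor[where n=2 and diff=diff and f=f and a="min x c" and b="max x c" and c=c and x=x] False
      by (auto simp: diff_def)
    have fx: "f x = f'' t / 2 * (x - c)\<^sup>2"
      using taylor zero by (simp add: diff_def numeral_2_eq_2)
    have "l / 2 \<le> f'' t" "f'' t \<le> 2 * l"
      using f''_bounds[of t] t x by (auto split: if_splits)
    moreover have "0 \<le> (x - c)\<^sup>2" by simp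
    ultimately have quad: "l / 4 * (x - c)\<^sup>2 \<le> f x \<and> f x \<le> l * (x - c)\<^sup>2"
      unfolding fx by (intro conjI mult_right_mono) auto
    obtain z where z: "\<bar>z - c\<bar> \<le> \<bar>x - c\<bar>" "f' x - f' c = (x - c) * f'' z"
      using MVT_between[OF f''] .
    have "\<bar>f'' z\<bar> \<le> 2 * l" using f''_bounds[of z] z x by auto
    have "\<bar>f' x\<bar> = \<bar>f'' z\<bar> * \<bar>x - c\<bar>" using z(2) zero by (simp add: abs_mult)
    also have "\<dots> \<le> 2 * l * \<bar>x - c\<bar>" using \<open>\<bar>f'' z\<bar> \<le> 2 * l\<close> by (rule mult_right_mono) simp
    finally have "\<bar>f' x\<bar> \<le> 2 * l * \<bar>x - c\<bar>" .
    with quad show ?thesis by blast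
  qed
  show ?thesis
    by (rule that[of \<delta> "l / 4" l "2 * l"]) (use \<delta> pos bounds in \<open>auto simp: l_def\<close>)
qed

lemma vanishes_if_abs_deriv_le_self:
  fixes W W' :: "real \<Rightarrow> real"
  assumes "x \<in> {a<..<b}" "y \<in> {a<..<b}" and zero: "W x = 0"
    and dW: "\<And>t. t \<in> {a<..<b} \<Longrightarrow> (W has_real_derivative W' t) (at t)"
    and bound: "\<And>t. t \<in> {a<..<b} \<Longrightarrow> \<bar>W' t\<bar> \<le> K * W t"
    and nonneg: "\<And>t. 0 \<le> W t"
  shows "W y = 0"
proof -
  have between: "t \<in> {a<..<b}" if "min x y \<le> t" "t \<le> max x y" for t
    using assms(1,2) that by auto
  have "W y \<le> 0"
  proof (cases "x \<le> y")
    case True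
    have "W y * exp (- K * y) \<le> W x * exp (- K * x)"
    proof (rule DERIV_nonpos_imp_nonincreasing[OF True], intro exI conjI)
      fix t assume "x \<le> t" "t \<le> y"
      then have t: "t \<in> {a<..<b}" using between by simp
      show "((\<lambda>t. W t * exp (- K * t)) has_real_derivative (W' t - K * W t) * exp (- K * t)) (at t)"
        by (rule derivative_eq_intros dW[OF t] refl | simp add: algebra_simps)+
      show "(W' t - K * W t) * exp (- K * t) \<le> 0"
        using bound[OF t] by (simp add: mult_nonpos_nonneg)
    qed
    then show ?thesis using zero by (simp add: mult_le_0_iff)
  next
    case False
    have "W y * exp (K * y) \<le> W x * exp (K * x)"
    proof (rule DERIV_nonneg_imp_nondecreasing, use False in simp, intro exI conjI)
      fix t assume "y \<le> t" "t \<le> x"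
      then have t: "t \<in> {a<..<b}" using between by simp
      show "((\<lambda>t. W t * exp (K * t)) has_real_derivative (W' t + K * W t) * exp (K * t)) (at t)"
        by (rule derivative_eq_intros dW[OF t] refl | simp add: algebra_simps)+
      show "0 \<le> (W' t + K * W t) * exp (K * t)"
        using bound[OF t] by simp
    qed
    then show ?thesis using zero by (simp add: mult_le_0_iff)
  qed
  with nonneg[of y] show ?thesis by simp
qed

lemma exp_decay_of_deriv_le:
  fixes W W' :: "real \<Rightarrow> real"
  assumes dW: "\<And>t. t \<ge> X \<Longrightarrow> (W has_real_derivative W' t) (at t)"
    and decr: "\<And>t. t \<ge> X \<Longrightarrow> W' t \<le> - \<kappa> * W t" and "X \<le> x"
  shows "W x \<le> W X * exp (\<kappa> * X) * exp (- \<kappa> * x)"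
proof -
  have "W x * exp (\<kappa> * x) \<le> W X * exp (\<kappa> * X)"
  proof (rule DERIV_nonpos_imp_nonincreasing[OF \<open>X \<le> x\<close>], intro exI conjI)
    fix t assume t: "X \<le> t" "t \<le> x"
    show "((\<lambda>t. W t * exp (\<kappa> * t)) has_real_derivative (W' t + \<kappa> * W t) * exp (\<kappa> * t)) (at t)"
      by (rule derivative_eq_intros dW[OF t(1)] refl | simp add: algebra_simps)+
    show "(W' t + \<kappa> * W t) * exp (\<kappa> * t) \<le> 0"
      using decr[OF t(1)] by (intro mult_nonpos_nonneg) auto
  qed
  then have "W x * exp (\<kappa> * x) * exp (- \<kappa> * x) \<le> W X * exp (\<kappa> * X) * exp (- \<kappa> * x)"
    by (rule mult_right_mono) simp
  then show ?thesis by (simp add: mult.assoc flip: exp_add)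
qed

lemma deriv_neg_of_tendsto_zero:
  fixes W W' :: "real \<Rightarrow> real"
  assumes dW: "\<And>t. (W has_real_derivative W' t) (at t)" and cont: "continuous_on {X..} W'"
    and nonzero: "\<And>t. t \<ge> X \<Longrightarrow> W' t \<noteq> 0" and pos: "\<And>t. W t > 0"
    and lim: "(W \<longlongrightarrow> 0) at_top" and "X \<le> x"
  shows "W' x < 0"
proof (rule ccontr)
  assume "\<not> W' x < 0"
  with nonzero \<open>X \<le> x\<close> have "W' x > 0" by force
  \<comment> \<open>by the intermediate value theorem \<open>W'\<close> stays positive, so \<open>W\<close> increases and cannot tend to 0\<close>
  have "W' t > 0" if tx: "t \<ge> x" for t
  proof (rule ccontr)
    assume "\<not> W' t > 0"
    moreover have "continuous_on {x..t} W'"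
      using continuous_on_subset[OF cont] \<open>X \<le> x\<close> by auto
    ultimately obtain z where "x \<le> z" "z \<le> t" "W' z = 0"
      using IVT2'[of W' t 0 x] \<open>W' x > 0\<close> tx by auto
    with nonzero[of z] \<open>X \<le> x\<close> show False by simp
  qed
  then have "0 < - W x"
    using DERIV_neg_imp_decreasing_at_top[where f = "\<lambda>t. - W t" and flim = 0] DERIV_minus[OF dW]
      tendsto_minus[OF lim] by force
  with pos[of x] show False by simp
qed

lemma abs_le_sqrt_exp_of_square_le:
  fixes z B \<kappa> x :: real
  assumes "z\<^sup>2 \<le> B * exp (- \<kappa> * x)"
  shows "\<bar>z\<bar> \<le> sqrt B * exp (- (\<kappa> / 2) * x)"
proof -
  have B: "B \<ge> 0" using order_trans[OF zero_le_power2 assms] by (simp add: zero_le_mult_iff)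
  moreover have "(exp (- (\<kappa> / 2) * x))\<^sup>2 = exp (- \<kappa> * x)"
    by (simp flip: exp_double)
  ultimately have "(sqrt B * exp (- (\<kappa> / 2) * x))\<^sup>2 = B * exp (- \<kappa> * x)"
    by (simp add: power_mult_distrib)
  with assms have "\<bar>z\<bar> \<le> \<bar>sqrt B * exp (- (\<kappa> / 2) * x)\<bar>"
    by (simp add: abs_le_square_iff)
  with B show ?thesis by simp
qed

lemma ex_neq_of_tendsto:
  fixes l c :: "'b :: t2_space"
  assumes "(f \<longlongrightarrow> l) F" "F \<noteq> bot" "c \<noteq> l"
  shows "\<exists>x. f x \<noteq> c"
proof (rule ccontr)
  assume "\<not> (\<exists>x. f x \<noteq> c)"
  then have "f = (\<lambda>_. c)" by auto
  with assms show False using tendsto_const_iff[of F c l] by (simp add: trivial_limit_def)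
qed

section \<open>Newtonian trajectories approaching a nondegenerate vacuum\<close>

lemma newton_energy_constant:
  fixes s f U U' :: "real \<Rightarrow> real"
  assumes ds: "\<And>x. (s has_real_derivative f x) (at x)"
    and df: "\<And>x. (f has_real_derivative U' (s x)) (at x)"
    and dU: "\<And>y. (U has_real_derivative U' y) (at y)"
  shows "(f x)\<^sup>2 - 2 * U (s x) = (f y)\<^sup>2 - 2 * U (s y)"
proof (rule DERIV_isconst_all[where f = "\<lambda>x. (f x)\<^sup>2 - 2 * U (s x)"], intro allI)
  fix t
  have "((\<lambda>x. (f x)\<^sup>2) has_real_derivative 2 * f t * U' (s t)) (at t)"
    by (rule derivative_eq_intros df refl | simp)+
  moreover have "((\<lambda>x. U (s x)) has_real_derivative U' (s t) * f t) (at t)"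
    by (rule DERIV_chain2[OF dU ds])
  ultimately have "((\<lambda>x. (f x)\<^sup>2 - 2 * U (s x)) has_real_derivative
      2 * f t * U' (s t) - 2 * (U' (s t) * f t)) (at t)"
    by (intro DERIV_diff DERIV_cmult)
  then show "((\<lambda>x. (f x)\<^sup>2 - 2 * U (s x)) has_real_derivative 0) (at t)"
    by (simp add: algebra_simps)
qed

lemma equipartition_of_limit:
  fixes s f U U' :: "real \<Rightarrow> real"
  assumes ds: "\<And>x. (s has_real_derivative f x) (at x)"
    and df: "\<And>x. (f has_real_derivative U' (s x)) (at x)"
    and dU: "\<And>y. (U has_real_derivative U' y) (at y)"
    and lim: "(s \<longlongrightarrow> c) at_top" and vacuum: "U c = 0"
  shows "(f x)\<^sup>2 = 2 * U (s x)"
proof -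
  define E where "E = (f 0)\<^sup>2 - 2 * U (s 0)"
  have energy: "(f x)\<^sup>2 = E + 2 * U (s x)" for x
    using newton_energy_constant[OF ds df dU, of x 0] by (simp add: E_def)
  have "((\<lambda>x. U (s x)) \<longlongrightarrow> 0) at_top"
    using isCont_tendsto_compose[OF DERIV_isCont[OF dU] lim] vacuum by simp
  then have "((\<lambda>x. E + 2 * U (s x)) \<longlongrightarrow> E) at_top"
    using tendsto_add[OF tendsto_const tendsto_mult_right_zero] by fastforce
  then have f_lim: "((\<lambda>x. (f x)\<^sup>2) \<longlongrightarrow> E) at_top"
    by (simp add: energy)
  have "E \<ge> 0"
    by (rule tendsto_lowerbound[OF f_lim]) auto
  moreover have "\<not> E > 0"
  proof
    assume E: "E > 0"
    have "\<forall>\<^sub>F x in at_top. (f x)\<^sup>2 > E / 2 \<and> dist (s x) c < 1"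
      using order_tendstoD(1)[OF f_lim, of "E / 2"] tendstoD[OF lim, of 1] E
      by (auto intro: eventually_conj)
    then obtain X where X: "\<And>x. x \<ge> X \<Longrightarrow> (f x)\<^sup>2 > E / 2 \<and> \<bar>s x - c\<bar> < 1"
      unfolding eventually_at_top_linorder dist_real_def by blast
    \<comment> \<open>the trajectory moves with speed at least \<open>sqrt (E/2)\<close>, yet stays in an interval of length 2\<close>
    define T where "T = 1 + 8 / E"
    have "8 / E * 1 \<le> T * T" unfolding T_def using E by (intro mult_mono) auto
    then have T: "T > 0" "4 \<le> T\<^sup>2 * (E / 2)"
      using E by (auto simp: T_def power2_eq_square field_simps)
    obtain z where z: "X < z" "s (X + T) - s X = T * f z"
      using MVT2[of X "X + T" s f] ds T by auto
    have "4 < (s (X + T) - s X)\<^sup>2"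
    proof -
      have "T\<^sup>2 * (E / 2) < T\<^sup>2 * (f z)\<^sup>2"
        using X[of z] z T by (intro mult_strict_left_mono) auto
      with T(2) have "4 < T\<^sup>2 * (f z)\<^sup>2" by linarith
      then show ?thesis by (simp add: z power_mult_distrib)
    qed
    moreover have "\<bar>s (X + T) - s X\<bar> < 2" using X[of X] X[of "X + T"] T by auto
    ultimately show False using abs_le_square_iff[of 2 "s (X + T) - s X"] by simp
  qed
  ultimately show ?thesis using energy[of x] by simp
qed

lemma trajectory_avoids_vacuum:
  fixes s f U :: "real \<Rightarrow> real"
  assumes ds: "\<And>x. (s has_real_derivative f x) (at x)"
    and \<delta>: "\<delta> > 0" and near: "\<And>\<psi>. \<bar>\<psi> - c\<bar> < \<delta> \<Longrightarrow> U \<psi> \<le> M * (\<psi> - c)\<^sup>2"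
    and equi: "\<And>x. (f x)\<^sup>2 = 2 * U (s x)"
    and "s y \<noteq> c"
  shows "s x \<noteq> c"
proof -
  \<comment> \<open>near the vacuum \<open>W = (s - c)\<^sup>2\<close> obeys \<open>\<bar>W'\<bar> \<le> K W\<close>, so once zero it stays zero\<close>
  define Z where "Z = {x. s x = c}"
  have cont: "isCont s x" for x using ds by (rule DERIV_isCont)
  have "closed Z" unfolding Z_def
    by (intro closed_Collect_eq continuous_at_imp_continuous_on ballI cont continuous_intros)
  moreover have "open Z"
    unfolding open_dist
  proof (intro ballI)
    fix x0 assume "x0 \<in> Z"
    then have sx0: "s x0 = c" by (simp add: Z_def)
    obtain e where e: "e > 0" and close: "\<And>t. dist t x0 < e \<Longrightarrow> \<bar>s t - c\<bar> < \<delta>"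
      using cont[of x0] \<delta> unfolding continuous_at_eps_delta sx0 dist_real_def by blast
    define W where "W t = (s t - c)\<^sup>2" for t
    have "W y = 0" if "dist y x0 < e" for y
    proof (rule vanishes_if_abs_deriv_le_self[where W = W and x = x0 and a = "x0 - e" and b = "x0 + e"])
      show "x0 \<in> {x0 - e<..<x0 + e}" "y \<in> {x0 - e<..<x0 + e}" "W x0 = 0"
        using e that sx0 by (auto simp: W_def dist_real_def)
      show "(W has_real_derivative 2 * (s t - c) * f t) (at t)" for t
        unfolding W_def by (rule derivative_eq_intros ds refl | simp)+
      show "\<bar>2 * (s t - c) * f t\<bar> \<le> (1 + 2 * \<bar>M\<bar>) * W t" if "t \<in> {x0 - e<..<x0 + e}" for t
      proof -
        have "\<bar>s t - c\<bar> < \<delta>" using close that by (simp add: dist_real_def abs_diff_less_iff)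
        then have "(f t)\<^sup>2 \<le> 2 * (M * W t)" using near equi[of t] by (simp add: W_def)
        also have "\<dots> \<le> 2 * \<bar>M\<bar> * W t" by (simp add: W_def mult_right_mono)
        finally have "(f t)\<^sup>2 \<le> 2 * \<bar>M\<bar> * W t" .
        moreover have "\<bar>2 * (s t - c) * f t\<bar> \<le> (s t - c)\<^sup>2 + (f t)\<^sup>2"
          using sum_squares_bound[of "\<bar>s t - c\<bar>" "\<bar>f t\<bar>"] by (simp only: abs_mult) simp
        ultimately show ?thesis by (simp add: W_def algebra_simps)
      qed
      show "0 \<le> W t" for t by (simp add: W_def)
    qed
    with e show "\<exists>e>0. \<forall>y. dist y x0 < e \<longrightarrow> y \<in> Z" by (auto simp: W_def Z_def)
  qed
  ultimately have "Z = {} \<or> Z = UNIV" using clopen by blast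
  moreover have "y \<notin> Z" using \<open>s y \<noteq> c\<close> by (simp add: Z_def)
  ultimately show ?thesis by (auto simp: Z_def)
qed

lemma trajectory_exp_approach:
  fixes s f U :: "real \<Rightarrow> real"
  assumes ds: "\<And>x. (s has_real_derivative f x) (at x)" and cf: "\<And>x. isCont f x"
    and \<delta>: "\<delta> > 0" and k: "k > 0" and near: "\<And>\<psi>. \<bar>\<psi> - c\<bar> < \<delta> \<Longrightarrow> k * (\<psi> - c)\<^sup>2 \<le> U \<psi>"
    and equi: "\<And>x. (f x)\<^sup>2 = 2 * U (s x)"
    and avoid: "\<And>x. s x \<noteq> c" and lim: "(s \<longlongrightarrow> c) at_top"
  obtains \<kappa> X A where "\<kappa> > 0" "\<And>x. x \<ge> X \<Longrightarrow> \<bar>s x - c\<bar> \<le> A * exp (- \<kappa> * x)"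
proof -
  obtain X where X: "\<And>x. x \<ge> X \<Longrightarrow> \<bar>s x - c\<bar> < \<delta>"
    using tendstoD[OF lim \<delta>] unfolding eventually_at_top_linorder dist_real_def by blast
  define W where "W t = (s t - c)\<^sup>2" for t
  define h where "h t = (s t - c) * f t" for t
  have dW: "(W has_real_derivative 2 * h t) (at t)" for t
    unfolding W_def h_def by (rule derivative_eq_intros ds refl | simp)+
  have W_pos: "W t > 0" for t using avoid[of t] by (simp add: W_def)
  have speed: "\<bar>sqrt (2 * k) * (s x - c)\<bar> \<le> \<bar>f x\<bar>" if "x \<ge> X" for x
  proof -
    have "(sqrt (2 * k) * (s x - c))\<^sup>2 \<le> (f x)\<^sup>2"
      using near[OF X[OF that]] k by (simp add: equi power_mult_distrib)
    then show ?thesis by (simp add: abs_le_square_iff)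
  qed
  have h_nonzero: "h x \<noteq> 0" if "x \<ge> X" for x
    using speed[OF that] avoid[of x] k by (auto simp: h_def)
  have h_neg: "h x < 0" if "x \<ge> X" for x
  proof -
    have "continuous_on {X..} (\<lambda>t. 2 * h t)"
      unfolding h_def
      by (intro continuous_at_imp_continuous_on ballI continuous_intros cf DERIV_isCont[OF ds])
    moreover have "((\<lambda>t. W t) \<longlongrightarrow> 0) at_top"
      unfolding W_def using tendsto_power[OF tendsto_diff[OF lim tendsto_const[of c]], of 2] by simp
    ultimately have "2 * h x < 0"
      using deriv_neg_of_tendsto_zero[OF dW _ _ W_pos _ that] h_nonzero by simp
    then show ?thesis by simp
  qed
  define \<kappa> where "\<kappa> = 2 * sqrt (2 * k)"
  have W_deriv_le: "2 * h t \<le> - \<kappa> * W t" if t: "t \<ge> X" for t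
  proof -
    have "sqrt (2 * k) * W t = sqrt (2 * k) * (\<bar>s t - c\<bar> * \<bar>s t - c\<bar>)"
      by (simp add: W_def power2_eq_square)
    also have "\<dots> = \<bar>sqrt (2 * k) * (s t - c)\<bar> * \<bar>s t - c\<bar>"
      using k by (simp add: abs_mult mult.assoc)
    also have "\<dots> \<le> \<bar>f t\<bar> * \<bar>s t - c\<bar>" by (rule mult_right_mono[OF speed[OF t]]) simp
    also have "\<dots> = \<bar>h t\<bar>" by (simp only: h_def abs_mult mult.commute)
    also have "\<dots> = - h t" using h_neg[OF t] by (rule abs_of_neg)
    finally have "sqrt (2 * k) * W t \<le> - h t" .
    then show ?thesis unfolding \<kappa>_def by linarith
  qed
  have W_decay: "W x \<le> W X * exp (\<kappa> * X) * exp (- \<kappa> * x)" if "x \<ge> X" for x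
    by (rule exp_decay_of_deriv_le[OF dW W_deriv_le that])
  have "\<bar>s x - c\<bar> \<le> sqrt (W X * exp (\<kappa> * X)) * exp (- (\<kappa> / 2) * x)" if "x \<ge> X" for x
    using W_decay[OF that] by (intro abs_le_sqrt_exp_of_square_le) (simp add: W_def)
  moreover have "\<kappa> / 2 > 0" using k by (simp add: \<kappa>_def)
  ultimately show ?thesis using that by blast
qed

lemma trajectory_derivatives_exp_decay:
  fixes s f U U' U'' :: "real \<Rightarrow> real"
  assumes dU: "\<And>y. (U has_real_derivative U' y) (at y)"
    and dU': "\<And>y. (U' has_real_derivative U'' y) (at y)" and cU'': "isCont U'' c"
    and vacuum: "U c = 0" "U' c = 0" "U'' c > 0"
    and ds: "\<And>x. (s has_real_derivative f x) (at x)"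
    and df: "\<And>x. (f has_real_derivative U' (s x)) (at x)"
    and lim: "(s \<longlongrightarrow> c) at_top" and "s y \<noteq> c"
  obtains \<kappa> X B where "\<kappa> > 0"
    "\<And>x. x \<ge> X \<Longrightarrow> \<bar>f x\<bar> \<le> B * exp (- \<kappa> * x) \<and> \<bar>U' (s x)\<bar> \<le> B * exp (- \<kappa> * x)"
proof -
  obtain \<delta> k M L where \<delta>: "\<delta> > 0" and k: "k > 0" and near: "\<And>\<psi>. \<bar>\<psi> - c\<bar> < \<delta> \<Longrightarrow>
      k * (\<psi> - c)\<^sup>2 \<le> U \<psi> \<and> U \<psi> \<le> M * (\<psi> - c)\<^sup>2 \<and> \<bar>U' \<psi>\<bar> \<le> L * \<bar>\<psi> - c\<bar>"
    using quadratic_bounds_near_nondegenerate_zero[OF dU dU' cU'' vacuum] by blast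
  have upper: "U \<psi> \<le> M * (\<psi> - c)\<^sup>2" and lower: "k * (\<psi> - c)\<^sup>2 \<le> U \<psi>"
    if "\<bar>\<psi> - c\<bar> < \<delta>" for \<psi>
    using near[OF that] by simp_all
  have equi: "(f x)\<^sup>2 = 2 * U (s x)" for x
    by (rule equipartition_of_limit[OF ds df dU lim vacuum(1)])
  have avoid: "s x \<noteq> c" for x
    by (rule trajectory_avoids_vacuum[OF ds \<delta> upper equi \<open>s y \<noteq> c\<close>])
  obtain \<kappa> X A where \<kappa>: "\<kappa> > 0" and approach: "\<And>x. x \<ge> X \<Longrightarrow> \<bar>s x - c\<bar> \<le> A * exp (- \<kappa> * x)"
    using trajectory_exp_approach[OF ds DERIV_isCont[OF df] \<delta> k lower equi avoid lim] by blast
  obtain X' where X': "\<And>x. x \<ge> X' \<Longrightarrow> \<bar>s x - c\<bar> < \<delta>"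
    using tendstoD[OF lim \<delta>] unfolding eventually_at_top_linorder dist_real_def by blast
  define B where "B = (sqrt (2 * \<bar>M\<bar>) + \<bar>L\<bar>) * A"
  have "\<bar>f x\<bar> \<le> B * exp (- \<kappa> * x) \<and> \<bar>U' (s x)\<bar> \<le> B * exp (- \<kappa> * x)" if x: "x \<ge> max X X'" for x
  proof -
    note near_x = near[OF X'[of x]]
    have "(f x)\<^sup>2 \<le> (sqrt (2 * \<bar>M\<bar>) * \<bar>s x - c\<bar>)\<^sup>2"
    proof -
      have "(f x)\<^sup>2 \<le> 2 * (M * (s x - c)\<^sup>2)" using near_x x equi[of x] by simp
      also have "\<dots> \<le> 2 * (\<bar>M\<bar> * (s x - c)\<^sup>2)" by (simp add: mult_right_mono)
      finally show ?thesis by (simp add: power_mult_distrib)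
    qed
    then have f_le: "\<bar>f x\<bar> \<le> sqrt (2 * \<bar>M\<bar>) * \<bar>s x - c\<bar>"
      by (simp add: abs_le_square_iff[symmetric] abs_mult)
    have "\<bar>U' (s x)\<bar> \<le> L * \<bar>s x - c\<bar>" using near_x x by simp
    also have "\<dots> \<le> \<bar>L\<bar> * \<bar>s x - c\<bar>" by (simp add: mult_right_mono)
    finally have U'_le: "\<bar>U' (s x)\<bar> \<le> \<bar>L\<bar> * \<bar>s x - c\<bar>" .
    define e where "e = A * exp (- \<kappa> * x)"
    have sc: "\<bar>s x - c\<bar> \<le> e" using approach x by (simp add: e_def)
    then have "0 \<le> e" by (rule order_trans[OF abs_ge_zero])
    moreover have "sqrt (2 * \<bar>M\<bar>) * \<bar>s x - c\<bar> \<le> sqrt (2 * \<bar>M\<bar>) * e" "\<bar>L\<bar> * \<bar>s x - c\<bar> \<le> \<bar>L\<bar> * e"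
      using sc by (simp_all add: mult_left_mono)
    moreover have "B * exp (- \<kappa> * x) = sqrt (2 * \<bar>M\<bar>) * e + \<bar>L\<bar> * e"
      by (simp add: B_def e_def algebra_simps)
    moreover from \<open>0 \<le> e\<close> have "0 \<le> sqrt (2 * \<bar>M\<bar>) * e" "0 \<le> \<bar>L\<bar> * e" by simp_all
    ultimately show ?thesis using f_le U'_le by linarith
  qed
  with \<kappa> show ?thesis using that by blast
qed

section \<open>Exponentially decaying functions\<close>

definition exp_decaying :: "(real \<Rightarrow> real) \<Rightarrow> bool" where
  "exp_decaying \<phi> \<longleftrightarrow> continuous_on UNIV \<phi> \<and> (\<exists>B \<kappa>. \<kappa> > 0 \<and> (\<forall>x. \<bar>\<phi> x\<bar> \<le> B * exp (- \<kappa> * \<bar>x\<bar>)))"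

lemma exp_decayingI:
  assumes "continuous_on UNIV \<phi>" "\<kappa> > 0" "\<And>x. \<bar>\<phi> x\<bar> \<le> B * exp (- \<kappa> * \<bar>x\<bar>)"
  shows "exp_decaying \<phi>"
  using assms unfolding exp_decaying_def by blast

lemma exp_decayingE:
  assumes "exp_decaying \<phi>"
  obtains \<kappa> B where "continuous_on UNIV \<phi>" "\<kappa> > 0" "B \<ge> 0" "\<And>x. \<bar>\<phi> x\<bar> \<le> B * exp (- \<kappa> * \<bar>x\<bar>)"
proof -
  obtain B \<kappa> where "continuous_on UNIV \<phi>" "\<kappa> > 0" and bound: "\<And>x. \<bar>\<phi> x\<bar> \<le> B * exp (- \<kappa> * \<bar>x\<bar>)"
    using assms unfolding exp_decaying_def by blast
  moreover have "B \<ge> 0" using order_trans[OF abs_ge_zero bound[of 0]] by simp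
  ultimately show ?thesis using that by blast
qed

lemma exp_decaying_of_tail_bounds:
  fixes \<phi> :: "real \<Rightarrow> real"
  assumes cont: "continuous_on UNIV \<phi>" and "\<kappa>1 > 0" "\<kappa>2 > 0"
    and top: "\<And>x. x \<ge> X \<Longrightarrow> \<bar>\<phi> x\<bar> \<le> B1 * exp (- \<kappa>1 * x)"
    and bot: "\<And>x. x \<ge> X \<Longrightarrow> \<bar>\<phi> (- x)\<bar> \<le> B2 * exp (- \<kappa>2 * x)"
  shows "exp_decaying \<phi>"
proof -
  define T where "T = max X 0"
  obtain M where M: "\<And>t. t \<in> {-T..T} \<Longrightarrow> \<bar>\<phi> t\<bar> \<le> M"
    using compact_imp_bounded[OF compact_continuous_image[OF continuous_on_subset[OF cont] compact_Icc]]
    unfolding bounded_iff by fastforce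
  define \<kappa> where "\<kappa> = min \<kappa>1 \<kappa>2"
  define B where "B = max (max B1 B2) (M * exp (\<kappa> * T))"
  have weaken: "\<bar>z\<bar> \<le> B * exp (- \<kappa> * x)"
    if z: "\<bar>z\<bar> \<le> B' * exp (- \<kappa>' * x)" and "x \<ge> 0" "\<kappa> \<le> \<kappa>'" "B' \<le> B" for z x B' \<kappa>'
  proof -
    have "B' \<ge> 0" using order_trans[OF abs_ge_zero z] by (simp add: zero_le_mult_iff)
    then have "B' * exp (- \<kappa>' * x) \<le> B * exp (- \<kappa> * x)"
      using that by (intro mult_mono) (auto intro: mult_right_mono)
    with z show ?thesis by linarith
  qed
  have "\<bar>\<phi> t\<bar> \<le> B * exp (- \<kappa> * \<bar>t\<bar>)" for t
  proof (cases "\<bar>t\<bar> \<le> T")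
    case True
    then have "M \<ge> 0" "\<bar>\<phi> t\<bar> \<le> M" using M[of t] by (auto simp: abs_le_iff)
    moreover have "1 \<le> exp (\<kappa> * T) * exp (- \<kappa> * \<bar>t\<bar>)"
      using True \<open>\<kappa>1 > 0\<close> \<open>\<kappa>2 > 0\<close> by (simp add: \<kappa>_def mult_left_mono flip: exp_add)
    ultimately have "\<bar>\<phi> t\<bar> \<le> M * exp (\<kappa> * T) * exp (- \<kappa> * \<bar>t\<bar>)"
      by (metis mult.assoc mult_left_mono mult.right_neutral order_trans)
    also have "\<dots> \<le> B * exp (- \<kappa> * \<bar>t\<bar>)" by (intro mult_right_mono) (auto simp: B_def)
    finally show ?thesis .
  next
    case False
    show ?thesis
    proof (cases "t \<ge> 0")
      case True
      with False show ?thesis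
        using weaken[OF top[of t]] by (simp add: T_def \<kappa>_def B_def)
    next
      case neg: False
      with False show ?thesis
        using weaken[OF bot[of "- t"]] by (simp add: T_def \<kappa>_def B_def)
    qed
  qed
  with cont show ?thesis
    by (intro exp_decayingI) (auto simp: \<kappa>_def \<open>\<kappa>1 > 0\<close> \<open>\<kappa>2 > 0\<close>)
qed

lemma exp_decaying_add:
  assumes "exp_decaying \<phi>" "exp_decaying \<psi>"
  shows "exp_decaying (\<lambda>x. \<phi> x + \<psi> x)"
proof -
  obtain \<kappa>1 B1 where "continuous_on UNIV \<phi>" "\<kappa>1 > 0" "B1 \<ge> 0"
    and b1: "\<And>x. \<bar>\<phi> x\<bar> \<le> B1 * exp (- \<kappa>1 * \<bar>x\<bar>)"
    using exp_decayingE[OF assms(1)] by blast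
  moreover obtain \<kappa>2 B2 where "continuous_on UNIV \<psi>" "\<kappa>2 > 0" "B2 \<ge> 0"
    and b2: "\<And>x. \<bar>\<psi> x\<bar> \<le> B2 * exp (- \<kappa>2 * \<bar>x\<bar>)"
    using exp_decayingE[OF assms(2)] by blast
  moreover have "\<bar>\<phi> x + \<psi> x\<bar> \<le> (B1 + B2) * exp (- min \<kappa>1 \<kappa>2 * \<bar>x\<bar>)" for x
  proof -
    have "B1 * exp (- \<kappa>1 * \<bar>x\<bar>) \<le> B1 * exp (- min \<kappa>1 \<kappa>2 * \<bar>x\<bar>)"
      "B2 * exp (- \<kappa>2 * \<bar>x\<bar>) \<le> B2 * exp (- min \<kappa>1 \<kappa>2 * \<bar>x\<bar>)"
      using \<open>B1 \<ge> 0\<close> \<open>B2 \<ge> 0\<close> by (auto intro!: mult_left_mono mult_right_mono)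
    moreover have "\<bar>\<phi> x + \<psi> x\<bar> \<le> \<bar>\<phi> x\<bar> + \<bar>\<psi> x\<bar>" by (rule abs_triangle_ineq)
    ultimately show ?thesis using b1[of x] b2[of x] by (simp add: distrib_right)
  qed
  ultimately show ?thesis
    by (intro exp_decayingI[where \<kappa> = "min \<kappa>1 \<kappa>2" and B = "B1 + B2"]) (auto intro: continuous_on_add)
qed

lemma exp_decaying_cmult:
  assumes "exp_decaying \<phi>"
  shows "exp_decaying (\<lambda>x. c * \<phi> x)"
proof -
  obtain \<kappa> B where "continuous_on UNIV \<phi>" "\<kappa> > 0"
    and bound: "\<And>x. \<bar>\<phi> x\<bar> \<le> B * exp (- \<kappa> * \<bar>x\<bar>)"
    using exp_decayingE[OF assms] by blast
  moreover have "\<bar>c * \<phi> x\<bar> \<le> (\<bar>c\<bar> * B) * exp (- \<kappa> * \<bar>x\<bar>)" for x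
    using mult_left_mono[OF bound[of x], of "\<bar>c\<bar>"] by (simp add: abs_mult mult.assoc)
  ultimately show ?thesis by (intro exp_decayingI) (auto intro: continuous_on_mult_left)
qed

lemma exp_decaying_diff:
  assumes "exp_decaying \<phi>" "exp_decaying \<psi>"
  shows "exp_decaying (\<lambda>x. \<phi> x - \<psi> x)"
  using exp_decaying_add[OF assms(1) exp_decaying_cmult[OF assms(2), of "-1"]] by simp

lemma exp_decaying_mult:
  assumes "exp_decaying \<phi>" "exp_decaying \<psi>"
  shows "exp_decaying (\<lambda>x. \<phi> x * \<psi> x)"
proof -
  obtain \<kappa>1 B1 where "continuous_on UNIV \<phi>" "\<kappa>1 > 0"
    and b1: "\<And>x. \<bar>\<phi> x\<bar> \<le> B1 * exp (- \<kappa>1 * \<bar>x\<bar>)"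
    using exp_decayingE[OF assms(1)] by blast
  moreover obtain \<kappa>2 B2 where "continuous_on UNIV \<psi>" "\<kappa>2 > 0"
    and b2: "\<And>x. \<bar>\<psi> x\<bar> \<le> B2 * exp (- \<kappa>2 * \<bar>x\<bar>)"
    using exp_decayingE[OF assms(2)] by blast
  moreover have "\<bar>\<phi> x * \<psi> x\<bar> \<le> (B1 * B2) * exp (- (\<kappa>1 + \<kappa>2) * \<bar>x\<bar>)" for x
  proof -
    have "\<bar>\<phi> x * \<psi> x\<bar> \<le> (B1 * exp (- \<kappa>1 * \<bar>x\<bar>)) * (B2 * exp (- \<kappa>2 * \<bar>x\<bar>))"
      unfolding abs_mult using b1[of x] b2[of x] by (intro mult_mono) (auto intro: order_trans[OF abs_ge_zero])
    then show ?thesis by (simp add: algebra_simps flip: exp_add)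
  qed
  ultimately show ?thesis
    by (intro exp_decayingI[where \<kappa> = "\<kappa>1 + \<kappa>2" and B = "B1 * B2"]) (auto intro: continuous_on_mult)
qed

lemma abs_mult_exp_neg_le:
  fixes x \<kappa> :: real
  assumes "\<kappa> > 0"
  shows "\<bar>x\<bar> * exp (- \<kappa> * \<bar>x\<bar>) \<le> 1 / \<kappa>"
proof -
  have "\<kappa> * \<bar>x\<bar> \<le> exp (\<kappa> * \<bar>x\<bar>)" using exp_ge_add_one_self[of "\<kappa> * \<bar>x\<bar>"] by linarith
  then have "\<kappa> * \<bar>x\<bar> * exp (- \<kappa> * \<bar>x\<bar>) \<le> exp (\<kappa> * \<bar>x\<bar>) * exp (- \<kappa> * \<bar>x\<bar>)"
    by (rule mult_right_mono) simp
  then show ?thesis using assms by (simp add: field_simps flip: exp_add)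
qed

lemma exp_decaying_mult_shifted_id:
  assumes "exp_decaying \<phi>"
  shows "exp_decaying (\<lambda>x. (x - b) * \<phi> x)"
proof -
  obtain \<kappa> B where "continuous_on UNIV \<phi>" "\<kappa> > 0" "B \<ge> 0"
    and bound: "\<And>x. \<bar>\<phi> x\<bar> \<le> B * exp (- \<kappa> * \<bar>x\<bar>)"
    using exp_decayingE[OF assms] by blast
  moreover have "\<bar>(x - b) * \<phi> x\<bar> \<le> (B * (2 / \<kappa> + \<bar>b\<bar>)) * exp (- (\<kappa> / 2) * \<bar>x\<bar>)" for x
  proof -
    have half: "exp (- \<kappa> * \<bar>x\<bar>) = exp (- (\<kappa> / 2) * \<bar>x\<bar>) * exp (- (\<kappa> / 2) * \<bar>x\<bar>)"
      by (simp flip: exp_add)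
    have "\<bar>(x - b) * \<phi> x\<bar> \<le> (\<bar>x\<bar> + \<bar>b\<bar>) * (B * exp (- \<kappa> * \<bar>x\<bar>))"
      unfolding abs_mult using bound[of x] \<open>B \<ge> 0\<close> by (intro mult_mono) auto
    also have "\<dots> = B * ((\<bar>x\<bar> * exp (- (\<kappa> / 2) * \<bar>x\<bar>)) * exp (- (\<kappa> / 2) * \<bar>x\<bar>)
        + \<bar>b\<bar> * exp (- \<kappa> * \<bar>x\<bar>))"
      unfolding half by (simp add: algebra_simps)
    also have "\<dots> \<le> B * (2 / \<kappa> * exp (- (\<kappa> / 2) * \<bar>x\<bar>) + \<bar>b\<bar> * exp (- (\<kappa> / 2) * \<bar>x\<bar>))"
      using abs_mult_exp_neg_le[of "\<kappa> / 2" x] \<open>\<kappa> > 0\<close> \<open>B \<ge> 0\<close>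
      by (intro mult_left_mono add_mono mult_right_mono) auto
    finally show ?thesis by (simp add: algebra_simps)
  qed
  moreover have "\<kappa> / 2 > 0" using \<open>\<kappa> > 0\<close> by simp
  ultimately show ?thesis
    by (intro exp_decayingI[where \<kappa> = "\<kappa> / 2" and B = "B * (2 / \<kappa> + \<bar>b\<bar>)"])
      (auto intro!: continuous_intros)
qed

lemma exp_decaying_compose_affine:
  assumes "exp_decaying \<phi>" "\<gamma> \<noteq> 0"
  shows "exp_decaying (\<lambda>x. \<phi> (\<gamma> * (x - b)))"
proof -
  obtain \<kappa> B where cont: "continuous_on UNIV \<phi>" and "\<kappa> > 0" "B \<ge> 0"
    and bound: "\<And>x. \<bar>\<phi> x\<bar> \<le> B * exp (- \<kappa> * \<bar>x\<bar>)"
    using exp_decayingE[OF assms(1)] by blast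
  have "\<bar>\<phi> (\<gamma> * (x - b))\<bar> \<le> (B * exp (\<kappa> * \<bar>\<gamma>\<bar> * \<bar>b\<bar>)) * exp (- (\<kappa> * \<bar>\<gamma>\<bar>) * \<bar>x\<bar>)" for x
  proof -
    have "\<bar>\<gamma>\<bar> * \<bar>x\<bar> - \<bar>\<gamma>\<bar> * \<bar>b\<bar> \<le> \<bar>\<gamma> * (x - b)\<bar>"
      unfolding abs_mult using mult_left_mono[OF abs_triangle_ineq2[of x b], of "\<bar>\<gamma>\<bar>"]
      by (simp only: right_diff_distrib abs_ge_zero)
    then have "- \<kappa> * \<bar>\<gamma> * (x - b)\<bar> \<le> \<kappa> * \<bar>\<gamma>\<bar> * \<bar>b\<bar> + - (\<kappa> * \<bar>\<gamma>\<bar>) * \<bar>x\<bar>"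
      using mult_left_mono[of _ _ \<kappa>] \<open>\<kappa> > 0\<close> by (fastforce simp: algebra_simps)
    then have "exp (- \<kappa> * \<bar>\<gamma> * (x - b)\<bar>) \<le> exp (\<kappa> * \<bar>\<gamma>\<bar> * \<bar>b\<bar>) * exp (- (\<kappa> * \<bar>\<gamma>\<bar>) * \<bar>x\<bar>)"
      by (simp flip: exp_add)
    from mult_left_mono[OF this \<open>B \<ge> 0\<close>] bound[of "\<gamma> * (x - b)"] show ?thesis
      by (simp add: mult.assoc)
  qed
  moreover have "continuous_on UNIV (\<lambda>x. \<phi> (\<gamma> * (x - b)))"
    by (rule continuous_on_compose2[OF cont]) (auto intro!: continuous_intros)
  ultimately show ?thesis using \<open>\<kappa> > 0\<close> \<open>\<gamma> \<noteq> 0\<close>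
    by (intro exp_decayingI[where \<kappa> = "\<kappa> * \<bar>\<gamma>\<bar>" and B = "B * exp (\<kappa> * \<bar>\<gamma>\<bar> * \<bar>b\<bar>)"]) auto
qed

lemma integrable_exp_neg_abs:
  fixes \<kappa> :: real
  assumes "\<kappa> > 0"
  shows "integrable lborel (\<lambda>x. exp (- \<kappa> * \<bar>x\<bar>))"
proof -
  have pos: "integrable lborel (\<lambda>x. indicator {0<..} x * exp (- (x * \<kappa>)))"
    using integrable_I0i_exp_mscale[OF assms] unfolding set_integrable_def by simp
  then have neg: "integrable lborel (\<lambda>x. indicator {0<..} (- x) * exp (- ((- x) * \<kappa>)))"
    using lborel_integrable_real_affine_iff[of "-1" "\<lambda>x. indicator {0<..} x * exp (- (x * \<kappa>))" 0] by simp
  have zero: "integrable lborel (indicator {0} :: real \<Rightarrow> real)"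
    by (rule integrable_real_indicator) auto
  have "(\<lambda>x. exp (- \<kappa> * \<bar>x\<bar>)) = (\<lambda>x. indicator {0<..} x * exp (- (x * \<kappa>))
      + indicator {0<..} (- x) * exp (- ((- x) * \<kappa>)) + indicator {0} x)"
    by (auto simp: fun_eq_iff indicator_def mult.commute)
  with pos neg zero show ?thesis by simp
qed

lemma integrable_exp_decaying:
  assumes "exp_decaying \<phi>"
  shows "integrable lborel \<phi>"
proof -
  obtain \<kappa> B where cont: "continuous_on UNIV \<phi>" and "\<kappa> > 0"
    and bound: "\<And>x. \<bar>\<phi> x\<bar> \<le> B * exp (- \<kappa> * \<bar>x\<bar>)"
    using exp_decayingE[OF assms] by blast
  show ?thesis
  proof (rule Bochner_Integration.integrable_bound)
    show "integrable lborel (\<lambda>x. B * exp (- \<kappa> * \<bar>x\<bar>))"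
      using integrable_exp_neg_abs[OF \<open>\<kappa> > 0\<close>] by simp
    show "\<phi> \<in> borel_measurable lborel"
      using borel_measurable_continuous_onI[OF cont] by simp
    show "AE x in lborel. norm (\<phi> x) \<le> norm (B * exp (- \<kappa> * \<bar>x\<bar>))"
      using bound by (auto intro: order_trans[OF _ abs_ge_self])
  qed
qed

lemma integrable_mult_exp_decaying:
  assumes "exp_decaying \<phi>" "exp_decaying \<psi>"
  shows "integrable lborel (\<lambda>x. \<phi> x * \<psi> x)"
  by (rule integrable_exp_decaying[OF exp_decaying_mult[OF assms]])

lemma integral_pos_of_continuous:
  fixes h :: "real \<Rightarrow> real"
  assumes cont: "continuous_on UNIV h" and nonneg: "\<And>x. h x \<ge> 0"
    and int: "integrable lborel h" and pos: "h x0 > 0"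
  shows "integral\<^sup>L lborel h > 0"
proof -
  obtain e where e: "e > 0" and near: "\<And>y. \<bar>y - x0\<bar> < e \<Longrightarrow> \<bar>h y - h x0\<bar> < h x0 / 2"
    using cont pos unfolding continuous_on_eq_continuous_at[OF open_UNIV] continuous_at_eps_delta dist_real_def
    by (metis UNIV_I half_gt_zero)
  define I where "I = {x0 - e / 2 .. x0 + e / 2}"
  have below: "indicator I y * (h x0 / 2) \<le> h y" for y
  proof (cases "y \<in> I")
    case True
    then have "\<bar>y - x0\<bar> < e" using e by (auto simp: I_def abs_le_iff)
    then have "\<bar>h y - h x0\<bar> < h x0 / 2" by (rule near)
    then have "h x0 / 2 \<le> h y" using abs_ge_minus_self[of "h y - h x0"] by linarith
    with True show ?thesis by simp
  next
    case False
    then show ?thesis using nonneg[of y] by simp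
  qed
  have "0 < e * (h x0 / 2)" using e pos by simp
  also have "\<dots> = (\<integral>y. indicator I y * (h x0 / 2) \<partial>lborel)"
    using e by (simp add: I_def)
  also have "\<dots> \<le> integral\<^sup>L lborel h"
    by (intro integral_mono[OF _ int below] integrable_mult_left integrable_real_indicator)
      (auto simp: I_def emeasure_lborel_Icc_eq)
  finally show ?thesis .
qed

section \<open>The kink\<close>

lemma smooth_fun_has_derivatives:
  assumes "smooth_fun U"
  shows "(U has_real_derivative deriv U x) (at x)"
    and "(deriv U has_real_derivative deriv (deriv U) x) (at x)"
    and "isCont (deriv (deriv U)) x"
proof -
  have "((deriv ^^ n) U) differentiable (at x)" for n
    using assms unfolding smooth_fun_def by blast
  from this[of 0] this[of 1] this[of 2] show
    "(U has_real_derivative deriv U x) (at x)"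
    "(deriv U has_real_derivative deriv (deriv U) x) (at x)"
    "isCont (deriv (deriv U)) x"
    by (simp_all add: DERIV_deriv_iff_real_differentiable numeral_2_eq_2 differentiable_imp_continuous_within)
qed

lemma kink_has_derivatives:
  assumes "is_kink a U s"
  shows "(s has_real_derivative deriv s x) (at x)"
    and "(deriv s has_real_derivative deriv U (s x)) (at x)"
  using assms unfolding is_kink_def by (metis DERIV_deriv_iff_real_differentiable)+

lemma kink_derivatives_exp_decaying:
  assumes "a > 0" and U: "cond_U1 a U" and kink: "is_kink a U s"
  shows "exp_decaying (deriv s)" and "exp_decaying (deriv (deriv s))"
proof -
  have smooth: "smooth_fun U" and vacuum: "U a = 0" "U (-a) = 0" "deriv U a = 0" "deriv U (-a) = 0"
    "deriv (deriv U) a > 0" "deriv (deriv U) (-a) > 0"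
    using U unfolding cond_U1_def by auto
  note dU = smooth_fun_has_derivatives[OF smooth]
  note ds = kink_has_derivatives[OF kink]
  have lim_top: "(s \<longlongrightarrow> a) at_top" and lim_bot: "(s \<longlongrightarrow> -a) at_bot"
    using kink unfolding is_kink_def by auto
  have s2: "deriv (deriv s) = (\<lambda>x. deriv U (s x))"
    using kink unfolding is_kink_def by auto
  define r where "r = (\<lambda>x. s (- x))"
  define f where "f = (\<lambda>x. - deriv s (- x))"
  have dr: "(r has_real_derivative f x) (at x)" and df: "(f has_real_derivative deriv U (r x)) (at x)" for x
    using DERIV_mirror[THEN iffD1, OF ds(1)[of "- x"]]
      DERIV_minus[OF DERIV_mirror[THEN iffD1, OF ds(2)[of "- x"]]]
    by (simp_all add: r_def f_def)
  have lim_r: "(r \<longlongrightarrow> -a) at_top"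
    unfolding r_def using filterlim_compose[OF lim_bot filterlim_uminus_at_bot_at_top] by simp
  have "\<exists>y. s y \<noteq> a" "\<exists>y. r y \<noteq> -a"
    using ex_neq_of_tendsto[OF lim_bot] \<open>a > 0\<close>
      ex_neq_of_tendsto[OF filterlim_compose[OF lim_top filterlim_uminus_at_top_at_bot]]
    by (auto simp: r_def)
  then obtain y1 y2 where "s y1 \<noteq> a" "r y2 \<noteq> -a" by blast
  obtain \<kappa>1 X1 B1 where "\<kappa>1 > 0" and top: "\<And>x. x \<ge> X1 \<Longrightarrow>
      \<bar>deriv s x\<bar> \<le> B1 * exp (- \<kappa>1 * x) \<and> \<bar>deriv U (s x)\<bar> \<le> B1 * exp (- \<kappa>1 * x)"
    using trajectory_derivatives_exp_decay[OF dU(1,2,3) vacuum(1,3,5) ds(1,2) lim_top \<open>s y1 \<noteq> a\<close>] by blast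
  obtain \<kappa>2 X2 B2 where "\<kappa>2 > 0" and bot: "\<And>x. x \<ge> X2 \<Longrightarrow>
      \<bar>f x\<bar> \<le> B2 * exp (- \<kappa>2 * x) \<and> \<bar>deriv U (r x)\<bar> \<le> B2 * exp (- \<kappa>2 * x)"
    using trajectory_derivatives_exp_decay[OF dU(1,2,3) vacuum(2,4,6) dr df lim_r \<open>r y2 \<noteq> -a\<close>] by blast
  have cont: "continuous_on UNIV (deriv s)" "continuous_on UNIV (\<lambda>x. deriv U (s x))"
    by (intro continuous_at_imp_continuous_on ballI DERIV_isCont[OF ds(2)]
        isCont_o2[OF DERIV_isCont[OF ds(1)] DERIV_isCont[OF dU(2)]])+
  show "exp_decaying (deriv s)"
    by (rule exp_decaying_of_tail_bounds[OF cont(1) \<open>\<kappa>1 > 0\<close> \<open>\<kappa>2 > 0\<close>, of "max X1 X2" B1 B2])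
      (use top bot in \<open>auto simp: f_def\<close>)
  show "exp_decaying (deriv (deriv s))"
    unfolding s2
    by (rule exp_decaying_of_tail_bounds[OF cont(2) \<open>\<kappa>1 > 0\<close> \<open>\<kappa>2 > 0\<close>, of "max X1 X2" B1 B2])
      (use top bot in \<open>auto simp: r_def\<close>)
qed

lemma kink_deriv_square_integral_pos:
  assumes "a > 0" "cond_U1 a U" and kink: "is_kink a U s"
  shows "(\<integral>t. (deriv s t)\<^sup>2 \<partial>lborel) > 0"
proof -
  have decay: "exp_decaying (deriv s)" by (rule kink_derivatives_exp_decaying[OF assms])
  obtain t0 where "deriv s t0 \<noteq> 0"
  proof (rule ccontr)
    assume "\<not> thesis"
    with that have "deriv s t = 0" for t by blast
    then have const: "s t = s 0" for t
      using kink_has_derivatives(1)[OF kink] by (metis DERIV_isconst_all)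
    have "(s \<longlongrightarrow> a) at_top" "(s \<longlongrightarrow> -a) at_bot"
      using kink unfolding is_kink_def by auto
    then have "s 0 = a" "s 0 = -a"
      using ex_neq_of_tendsto[of s a at_top "s 0"] ex_neq_of_tendsto[of s "-a" at_bot "s 0"] const
      by auto
    with \<open>a > 0\<close> show False by simp
  qed
  show ?thesis
  proof (rule integral_pos_of_continuous)
    show "continuous_on UNIV (\<lambda>t. (deriv s t)\<^sup>2)"
      using decay unfolding exp_decaying_def by (auto intro: continuous_on_power)
    show "integrable lborel (\<lambda>t. (deriv s t)\<^sup>2)"
      using integrable_mult_exp_decaying[OF decay decay] by (simp add: power2_eq_square)
    show "(deriv s t0)\<^sup>2 > 0" using \<open>deriv s t0 \<noteq> 0\<close> by simp
  qed simp
qed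

section \<open>The symplectic form on two-dimensional spans\<close>

lemma Omega_lin_comb_left:
  assumes "integrable lborel (\<lambda>x. fst Y1 x * snd Z x)" "integrable lborel (\<lambda>x. fst Y2 x * snd Z x)"
    "integrable lborel (\<lambda>x. snd Y1 x * fst Z x)" "integrable lborel (\<lambda>x. snd Y2 x * fst Z x)"
  shows "Omega (lin_comb c1 Y1 c2 Y2) Z = c1 * Omega Y1 Z + c2 * Omega Y2 Z"
proof -
  have "(\<integral>x. (c1 * fst Y1 x + c2 * fst Y2 x) * snd Z x \<partial>lborel)
      = c1 * (\<integral>x. fst Y1 x * snd Z x \<partial>lborel) + c2 * (\<integral>x. fst Y2 x * snd Z x \<partial>lborel)"
    using assms by (simp add: distrib_right mult.assoc)
  moreover have "(\<integral>x. (c1 * snd Y1 x + c2 * snd Y2 x) * fst Z x \<partial>lborel)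
      = c1 * (\<integral>x. snd Y1 x * fst Z x \<partial>lborel) + c2 * (\<integral>x. snd Y2 x * fst Z x \<partial>lborel)"
    using assms by (simp add: distrib_right mult.assoc)
  ultimately show ?thesis unfolding Omega_def lin_comb_def by (simp add: algebra_simps)
qed

lemma Omega_self: "Omega Y Y = 0"
  by (simp add: Omega_def mult.commute)

lemma Omega_antisym: "Omega Y Z = - Omega Z Y"
  by (simp add: Omega_def mult.commute)

lemma symplectic_subspace_span2:
  assumes decay: "exp_decaying (fst Y1)" "exp_decaying (snd Y1)" "exp_decaying (fst Y2)" "exp_decaying (snd Y2)"
    and nondegenerate: "Omega Y1 Y2 \<noteq> 0"
  shows "symplectic_subspace (span2 Y1 Y2)"
  unfolding symplectic_subspace_def
proof (intro ballI impI)
  fix Y assume "Y \<in> span2 Y1 Y2" and orth: "\<forall>Z\<in>span2 Y1 Y2. Omega Y Z = 0"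
  then obtain c1 c2 where Y: "Y = lin_comb c1 Y1 c2 Y2" by (auto simp: span2_def)
  have lin: "Omega Y Z = c1 * Omega Y1 Z + c2 * Omega Y2 Z" if "Z \<in> {Y1, Y2}" for Z
    unfolding Y using that decay
    by (auto intro!: Omega_lin_comb_left integrable_mult_exp_decaying)
  have "lin_comb 1 Y1 0 Y2 = Y1" "lin_comb 0 Y1 1 Y2 = Y2" by (simp_all add: lin_comb_def)
  then have "Y1 \<in> span2 Y1 Y2" "Y2 \<in> span2 Y1 Y2" unfolding span2_def by (metis (mono_tags) mem_Collect_eq)+
  with orth have "Omega Y Y1 = 0" "Omega Y Y2 = 0" by auto
  with lin[of Y1] lin[of Y2] have "c2 * Omega Y2 Y1 = 0" "c1 * Omega Y1 Y2 = 0"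
    by (simp_all add: Omega_self)
  with nondegenerate Omega_antisym[of Y2 Y1] have "c1 = 0" "c2 = 0" by auto
  then show "Y = ((\<lambda>_. 0), (\<lambda>_. 0))" by (simp add: Y lin_comb_def)
qed

section \<open>Tangent vectors of the kink manifold\<close>

lemma lgamma_pos: "\<bar>v\<bar> < 1 \<Longrightarrow> lgamma v > 0"
  by (simp add: lgamma_def abs_square_less_1)

lemma lgamma_square:
  assumes "\<bar>v\<bar> < 1"
  shows "(lgamma v)\<^sup>2 * (1 - v\<^sup>2) = 1"
proof -
  have "1 - v\<^sup>2 > 0" using assms by (simp add: abs_square_less_1)
  then show ?thesis by (simp add: lgamma_def power_divide)
qed

lemma lgamma_has_real_derivative:
  assumes v: "\<bar>v\<bar> < 1"
  shows "(lgamma has_real_derivative v * lgamma v ^ 3) (at v)"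
proof -
  have w: "1 - v\<^sup>2 > 0" using v by (simp add: abs_square_less_1)
  have "((\<lambda>z. 1 - z\<^sup>2) has_real_derivative - (2 * v)) (at v)"
    by (rule derivative_eq_intros refl)+ simp
  from DERIV_chain2[OF DERIV_real_sqrt[OF w] this]
  have "((\<lambda>z. sqrt (1 - z\<^sup>2)) has_real_derivative inverse (sqrt (1 - v\<^sup>2)) / 2 * (- (2 * v))) (at v)" .
  then have "((\<lambda>z. inverse (sqrt (1 - z\<^sup>2))) has_real_derivative
      - (inverse (sqrt (1 - v\<^sup>2)) / 2 * (- (2 * v)) * inverse (sqrt (1 - v\<^sup>2) ^ Suc (Suc 0)))) (at v)"
    by (rule DERIV_inverse_fun) (use w in simp)
  moreover have "(\<lambda>z. inverse (sqrt (1 - z\<^sup>2))) = lgamma"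
    by (simp add: fun_eq_iff lgamma_def divide_inverse)
  moreover have "- (inverse (sqrt (1 - v\<^sup>2)) / 2 * (- (2 * v)) * inverse (sqrt (1 - v\<^sup>2) ^ Suc (Suc 0)))
      = v * lgamma v ^ 3"
    using w by (simp add: lgamma_def field_simps power3_eq_cube)
  ultimately show ?thesis by (simp only:)
qed

lemma psi_v_eq: "psi_v s v = (\<lambda>y. s (lgamma v * y))"
  by (simp add: fun_eq_iff psi_v_def)

lemma pi_v_eq: "pi_v s v = (\<lambda>y. - v * deriv (psi_v s v) y)"
  by (simp add: fun_eq_iff pi_v_def)

lemma tau1_eq:
  fixes s F G :: "real \<Rightarrow> real"
  assumes ds: "\<And>x. (s has_real_derivative F x) (at x)"
    and dF: "\<And>x. (F has_real_derivative G x) (at x)"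
  shows "tau1 s b v = (\<lambda>x. - lgamma v * F (lgamma v * (x - b)),
                       \<lambda>x. v * (lgamma v)\<^sup>2 * G (lgamma v * (x - b)))"
proof -
  define \<gamma> where "\<gamma> = lgamma v"
  have "((\<lambda>y. s (\<gamma> * y)) has_real_derivative F (\<gamma> * y) * \<gamma>) (at y)" for y
    by (rule DERIV_chain2[OF ds DERIV_cmult_Id])
  then have dpsi: "deriv (psi_v s v) = (\<lambda>y. \<gamma> * F (\<gamma> * y))"
    by (simp add: fun_eq_iff psi_v_eq \<gamma>_def DERIV_imp_deriv mult.commute)
  have "((\<lambda>y. F (\<gamma> * y)) has_real_derivative G (\<gamma> * y) * \<gamma>) (at y)" for y
    by (rule DERIV_chain2[OF dF DERIV_cmult_Id])
  then have "((\<lambda>y. - v * (\<gamma> * F (\<gamma> * y))) has_real_derivative - v * (\<gamma> * (G (\<gamma> * y) * \<gamma>))) (at y)" for y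
    by (intro DERIV_cmult)
  then have "deriv (pi_v s v) = (\<lambda>y. - v * (\<gamma> * (G (\<gamma> * y) * \<gamma>)))"
    unfolding pi_v_eq dpsi by (simp add: fun_eq_iff DERIV_imp_deriv)
  with dpsi show ?thesis
    by (simp add: tau1_def \<gamma>_def power2_eq_square mult_ac)
qed

lemma tau2_eq:
  fixes s F G :: "real \<Rightarrow> real"
  assumes ds: "\<And>x. (s has_real_derivative F x) (at x)"
    and dF: "\<And>x. (F has_real_derivative G x) (at x)" and v: "\<bar>v\<bar> < 1"
  shows "tau2 s b v = (\<lambda>x. v * lgamma v ^ 3 * ((x - b) * F (lgamma v * (x - b))),
      \<lambda>x. - (lgamma v ^ 3) * F (lgamma v * (x - b)) - v\<^sup>2 * lgamma v ^ 4 * ((x - b) * G (lgamma v * (x - b))))"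
proof -
  define \<gamma> where "\<gamma> = lgamma v"
  define D where "D = v * \<gamma> ^ 3"
  have dL: "(lgamma has_real_derivative D) (at v)"
    unfolding D_def \<gamma>_def by (rule lgamma_has_real_derivative[OF v])
  have dLy: "((\<lambda>w. lgamma w * y) has_real_derivative D * y) (at v)" for y
    using DERIV_mult[OF dL DERIV_const[of y]] by simp
  have dpsi: "deriv (psi_v s w) = (\<lambda>y. lgamma w * F (lgamma w * y))" for w
  proof -
    have "((\<lambda>y. s (lgamma w * y)) has_real_derivative F (lgamma w * y) * lgamma w) (at y)" for y
      by (rule DERIV_chain2[OF ds DERIV_cmult_Id])
    then show ?thesis by (simp add: fun_eq_iff psi_v_eq DERIV_imp_deriv mult.commute)
  qed
  have psi_w: "((\<lambda>w. psi_v s w y) has_real_derivative F (\<gamma> * y) * (D * y)) (at v)" for y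
    unfolding psi_v_def \<gamma>_def by (rule DERIV_chain2[OF ds dLy])
  have pi_w: "((\<lambda>w. pi_v s w y) has_real_derivative
      - (\<gamma> ^ 3) * F (\<gamma> * y) - v\<^sup>2 * \<gamma> ^ 4 * (y * G (\<gamma> * y))) (at v)" for y
  proof -
    have dFy: "((\<lambda>w. F (lgamma w * y)) has_real_derivative G (\<gamma> * y) * (D * y)) (at v)"
      unfolding \<gamma>_def by (rule DERIV_chain2[OF dF dLy])
    have "((\<lambda>w. - w * (lgamma w * F (lgamma w * y))) has_real_derivative
        - 1 * (\<gamma> * F (\<gamma> * y)) + (D * F (\<gamma> * y) + G (\<gamma> * y) * (D * y) * \<gamma>) * - v) (at v)"
      using DERIV_mult[OF DERIV_minus[OF DERIV_ident] DERIV_mult[OF dL dFy]] by (simp add: \<gamma>_def)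
    moreover have "(\<lambda>w. pi_v s w y) = (\<lambda>w. - w * (lgamma w * F (lgamma w * y)))"
      by (simp add: pi_v_eq dpsi)
    moreover have "\<gamma> + v * D = \<gamma> ^ 3"
      using lgamma_square[OF v] unfolding D_def \<gamma>_def by algebra
    then have "- 1 * (\<gamma> * F (\<gamma> * y)) + (D * F (\<gamma> * y) + G (\<gamma> * y) * (D * y) * \<gamma>) * - v
        = - (\<gamma> ^ 3) * F (\<gamma> * y) - v\<^sup>2 * \<gamma> ^ 4 * (y * G (\<gamma> * y))"
      unfolding D_def by algebra
    ultimately show ?thesis by simp
  qed
  show ?thesis
    by (simp add: tau2_def DERIV_imp_deriv[OF psi_w] DERIV_imp_deriv[OF pi_w] D_def \<gamma>_def algebra_simps)
qed

lemma tangent_vectors_exp_decaying: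
  fixes s F G :: "real \<Rightarrow> real"
  assumes ds: "\<And>x. (s has_real_derivative F x) (at x)"
    and dF: "\<And>x. (F has_real_derivative G x) (at x)" and v: "\<bar>v\<bar> < 1"
    and F: "exp_decaying F" and G: "exp_decaying G"
  shows "exp_decaying (fst (tau1 s b v))" "exp_decaying (snd (tau1 s b v))"
    "exp_decaying (fst (tau2 s b v))" "exp_decaying (snd (tau2 s b v))"
proof -
  have "lgamma v \<noteq> 0" using lgamma_pos[OF v] by simp
  then have F': "exp_decaying (\<lambda>x. F (lgamma v * (x - b)))"
    and G': "exp_decaying (\<lambda>x. G (lgamma v * (x - b)))"
    using F G by (simp_all add: exp_decaying_compose_affine)
  note F'' = exp_decaying_mult_shifted_id[OF F', of b] and G'' = exp_decaying_mult_shifted_id[OF G', of b]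
  show "exp_decaying (fst (tau1 s b v))" "exp_decaying (snd (tau1 s b v))"
    "exp_decaying (fst (tau2 s b v))" "exp_decaying (snd (tau2 s b v))"
    unfolding tau1_eq[OF ds dF] tau2_eq[OF ds dF v] fst_conv snd_conv
    by (rule exp_decaying_cmult[OF F'] exp_decaying_cmult[OF G'] exp_decaying_cmult[OF F'']
        exp_decaying_diff[OF exp_decaying_cmult[OF F'] exp_decaying_cmult[OF G'']])+
qed

lemma Omega_tau1_tau2:
  fixes s F G :: "real \<Rightarrow> real"
  assumes ds: "\<And>x. (s has_real_derivative F x) (at x)"
    and dF: "\<And>x. (F has_real_derivative G x) (at x)" and v: "\<bar>v\<bar> < 1"
    and F: "exp_decaying F" and G: "exp_decaying G"
  shows "Omega (tau1 s b v) (tau2 s b v) = lgamma v ^ 3 * (\<integral>t. (F t)\<^sup>2 \<partial>lborel)"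
proof -
  define \<gamma> where "\<gamma> = lgamma v"
  have \<gamma>: "\<gamma> > 0" using lgamma_pos[OF v] by (simp add: \<gamma>_def)
  note decay = tangent_vectors_exp_decaying[OF ds dF v F G, of b]
  have "Omega (tau1 s b v) (tau2 s b v)
      = (\<integral>x. fst (tau1 s b v) x * snd (tau2 s b v) x - snd (tau1 s b v) x * fst (tau2 s b v) x \<partial>lborel)"
    unfolding Omega_def using decay by (simp add: integrable_mult_exp_decaying)
  also have "\<dots> = (\<integral>x. \<gamma> ^ 4 * (F (\<gamma> * (x - b)))\<^sup>2 \<partial>lborel)"
    unfolding tau1_eq[OF ds dF] tau2_eq[OF ds dF v] \<gamma>_def[symmetric]
    by (rule Bochner_Integration.integral_cong) (simp_all add: power2_eq_square power3_eq_cube power4_eq_xxxx algebra_simps)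
  also have "\<dots> = \<gamma> ^ 4 * (\<integral>x. (F (- \<gamma> * b + \<gamma> * x))\<^sup>2 \<partial>lborel)"
    by (simp add: algebra_simps)
  also have "(\<integral>x. (F (- \<gamma> * b + \<gamma> * x))\<^sup>2 \<partial>lborel) = (\<integral>t. (F t)\<^sup>2 \<partial>lborel) / \<gamma>"
    using lborel_integral_real_affine[of \<gamma> "\<lambda>t. (F t)\<^sup>2" "- \<gamma> * b"] \<gamma> by simp
  finally show ?thesis using \<gamma> by (simp add: \<gamma>_def power4_eq_xxxx power3_eq_cube)
qed

theorem lemma3p2:
  fixes a :: real and U s :: "real \<Rightarrow> real" and b v :: real
  assumes "a > 0" and "cond_U1 a U" and "is_kink a U s" and "\<bar>v\<bar> < 1"
  shows "symplectic_subspace (span2 (tau1 s b v) (tau2 s b v))"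
proof -
  have ds: "(s has_real_derivative deriv s x) (at x)"
    and dF: "(deriv s has_real_derivative deriv (deriv s) x) (at x)" for x
    using kink_has_derivatives[OF assms(3)] assms(3) unfolding is_kink_def by auto
  note decay = kink_derivatives_exp_decaying[OF assms(1-3)]
  have "Omega (tau1 s b v) (tau2 s b v) = lgamma v ^ 3 * (\<integral>t. (deriv s t)\<^sup>2 \<partial>lborel)"
    by (rule Omega_tau1_tau2[OF ds dF assms(4) decay])
  also have "\<dots> > 0"
    using lgamma_pos[OF assms(4)] kink_deriv_square_integral_pos[OF assms(1-3)] by simp
  finally show ?thesis
    by (intro symplectic_subspace_span2 tangent_vectors_exp_decaying[OF ds dF assms(4) decay]) simp
qed

end
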